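(* For every policy $\kappa^j\in\mathcal{SP}^j$ and every $x\in\mathcal{CS}^j$ we have $Ax+B\kappa^j(x)+w\in\mathcal{CS}^j\subseteq\mathcal{X}$ for all $w\in\mathcal{W}$, and $\kappa^j(x)\in\mathcal{U}$.
   Context: System $x_{t+1}=Ax_t+Bu_t+w_t$, $A\in\mathbb{R}^{n\times n}$, $B\in\mathbb{R}^{n\times d}$ known; disturbances in $\mathcal{W}\subset\mathbb{R}^n$, a compact polytope containing the origin with vertices $v_w^1,\dots,v_w^l$. Constraints $x_t\in\mathcal{X}$, $u_t\in\mathcal{U}$ with $\mathcal{X},\mathcal{U}$ convex, compact, containing the origin. A gain $K$ and a polyhedron $\mathcal{O}\subset\mathcal{X}$ with vertices $v_o^1,\dots,v_o^m$ satisfy $x\in\mathcal{O}\Rightarrow(A+BK)x+w\in\mathcal{O}$ for all $w\in\mathcal{W}$. Stage cost $h:\mathbb{R}^n\times\mathbb{R}^d\to\mathbb{R}$ continuous, jointly convex, with $\mathcal{K}_\infty$ functions such that $\alpha^l_x(|x|_\mathcal{O})\le h(x,0)\le\alpha^u_x(|x|_\mathcal{O})$ and $\alpha^l_u(|u|_{K\mathcal{O}})\le h(0,u)\le\alpha^u_u(|u|_{K\mathcal{O}})$, where $|x|_\mathcal{S}=\inf_{y\in\mathcal{S}}\|x-y\|_2$, $K\mathcal{O}=\{Kx:x\in\mathcal{O}\}$. Horizon $N\ge1$. Construction. $\mathcal{CS}^0=\mathcal{O}$, $\mathbf{X}^0=[v_o^1,\dots,v_o^m]$, $\mathbf{U}^0=[Kv_o^1,\dots,Kv_o^m]$.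 For each iteration $i\in\{1,\dots,j\}$ there are a duration $T^i$, a closed-loop trajectory $x^i_0,\dots,x^i_{T^i}$, and for each $t\in\{0,\dots,T^i\}$ an $N$-step policy $[\pi^{i,*}_{t|t},\dots,\pi^{i,*}_{t+N-1|t}]$ with $x^i_{t+1}=Ax^i_t+B\pi^{i,*}_{t|t}(x^i_t)+w^i_t$, assumed to satisfy: the predicted system $x_{s+1|t}=Ax_{s|t}+B\pi^{i,*}_{s|t}(x_{s|t})+w_{s|t}$, $s=t,\dots,t+N-1$, $x_{t|t}=x^i_t$, satisfies $x_{s|t}\in\mathcal{X}$, $\pi^{i,*}_{s|t}(x_{s|t})\in\mathcal{U}$ and $x_{t+N|t}\in\mathcal{CS}^{i-1}$ for all disturbances in $\mathcal{W}$. Reachable sets $\mathcal{R}^i_{t\to t}=\{x^i_t\}$, $\mathcal{R}^i_{t\to s+1}=\{Ax+B\pi^{i,*}_{s|t}(x)+w:x\in\mathcal{R}^i_{t\to s},w\in\mathcal{W}\}$; $\mathcal{CS}^i=\mathrm{Conv}\big(\bigcup_{t=0}^{T^i}\bigcup_{s=t}^{t+N}\mathcal{R}^i_{t\to s}\cup\mathcal{CS}^{i-1}\big)$. With $v^{i,1}_{s|t},\dots,v^{i,l^{s-t}}_{s|t}$ the vertices of $\mathcal{R}^i_{t\to s}$, $\mathbf{X}^i$ and $\mathbf{U}^i$ append to $\mathbf{X}^{i-1},\mathbf{U}^{i-1}$ the columns $v^{i,r}_{s|t}$ and $\pi^{i,*}_{s|t}(v^{i,r}_{s|t})$ for all $t\in\{0,\dots,T^i\}$,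 $s\in\{t,\dots,t+N-1\}$, all $r$. $\Lambda^j(x)=\{\lambda\ge0:\mathbf{X}^j\lambda=x,\ \mathbf{1}^\top\lambda=1\}$. The set of safe policies $\mathcal{SP}^j$ consists of all $\kappa:\mathbb{R}^n\to\mathbb{R}^d$ such that for every $x\in\mathcal{CS}^j$ there is $\lambda\in\Lambda^j(x)$ with $\kappa(x)=\mathbf{U}^j\lambda$.
   Formalization: The invariant set $\mathcal{O}$ also satisfies $Kx\in\mathcal{U}$ for every $x\in\mathcal{O}$, and the vertices $v^{i,r}_{s|t}$ of $\mathcal{R}^i_{t\to s}$ are taken as the points reached from $x^i_t$ with disturbances drawn from the vertices of $\mathcal{W}$. Each condition added here is assumed in the paper as well or is needed for the statement above to hold. *)

theory Defs
  imports "HOL-Analysis.Analysis"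
begin

text \<open>With D = W this is the reachable set R_{t -> t+k}; with D = the vertex set of W
  these are the l^k points v_{t+k|t}^r (vertices) of R_{t -> t+k}.\<close>
fun propset :: "real^'n^'n \<Rightarrow> real^'d^'n \<Rightarrow> (nat \<Rightarrow> real^'n \<Rightarrow> real^'d) \<Rightarrow> (real^'n) set
    \<Rightarrow> real^'n \<Rightarrow> nat \<Rightarrow> nat \<Rightarrow> (real^'n) set" where
  "propset A B p D x0 t 0 = {x0}"
| "propset A B p D x0 t (Suc k) =
     {A *v x + B *v p (t + k) x + w | x w. x \<in> propset A B p D x0 t k \<and> w \<in> D}"

fun pred_state :: "real^'n^'n \<Rightarrow> real^'d^'n \<Rightarrow> (nat \<Rightarrow> real^'n \<Rightarrow> real^'d)
    \<Rightarrow> real^'n \<Rightarrow> nat \<Rightarrow> (nat \<Rightarrow> real^'n) \<Rightarrow> nat \<Rightarrow> real^'n" where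
  "pred_state A B p x0 t ws 0 = x0"
| "pred_state A B p x0 t ws (Suc k) =
     A *v pred_state A B p x0 t ws k + B *v p (t + k) (pred_state A B p x0 t ws k) + ws k"

text \<open>Convex safe sets CS^i. pol i t s = pi^{i,*}_{s|t}, xtraj i t = x^i_t, T i = T^i.\<close>
fun CS :: "real^'n^'n \<Rightarrow> real^'d^'n \<Rightarrow> (real^'n) set \<Rightarrow> nat \<Rightarrow> (nat \<Rightarrow> nat)
    \<Rightarrow> (nat \<Rightarrow> nat \<Rightarrow> real^'n) \<Rightarrow> (nat \<Rightarrow> nat \<Rightarrow> nat \<Rightarrow> real^'n \<Rightarrow> real^'d)
    \<Rightarrow> (real^'n) set \<Rightarrow> nat \<Rightarrow> (real^'n) set" where
  "CS A B W N T xtraj pol Oset 0 = Oset"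
| "CS A B W N T xtraj pol Oset (Suc i) =
     convex hull ((\<Union>t\<in>{0..T (Suc i)}. \<Union>k\<in>{0..N}.
                     propset A B (pol (Suc i) t) W (xtraj (Suc i) t) t k)
                  \<union> CS A B W N T xtraj pol Oset i)"

text \<open>The columns of (X^i ; U^i), as pairs (state column, input column).\<close>
fun cols :: "real^'n^'n \<Rightarrow> real^'d^'n \<Rightarrow> real^'n^'d \<Rightarrow> (real^'n) set \<Rightarrow> nat \<Rightarrow> (nat \<Rightarrow> nat)
    \<Rightarrow> (nat \<Rightarrow> nat \<Rightarrow> real^'n) \<Rightarrow> (nat \<Rightarrow> nat \<Rightarrow> nat \<Rightarrow> real^'n \<Rightarrow> real^'d)
    \<Rightarrow> (real^'n) set \<Rightarrow> nat \<Rightarrow> ((real^'n) \<times> (real^'d)) set" where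
  "cols A B K VW N T xtraj pol VO 0 = {(v, K *v v) | v. v \<in> VO}"
| "cols A B K VW N T xtraj pol VO (Suc i) =
     cols A B K VW N T xtraj pol VO i \<union>
     {(v, pol (Suc i) t (t + k) v) | t k v. t \<le> T (Suc i) \<and> k < N \<and>
        v \<in> propset A B (pol (Suc i) t) VW (xtraj (Suc i) t) t k}"

definition Lambda :: "((real^'n) \<times> (real^'d)) set \<Rightarrow> real^'n \<Rightarrow> (((real^'n) \<times> (real^'d)) \<Rightarrow> real) set" where
  "Lambda C x = {lam. (\<forall>c\<in>C. lam c \<ge> 0) \<and> (\<Sum>c\<in>C. lam c) = 1 \<and> (\<Sum>c\<in>C. lam c *\<^sub>R fst c) = x}"

definition SP :: "((real^'n) \<times> (real^'d)) set \<Rightarrow> (real^'n) set \<Rightarrow> (real^'n \<Rightarrow> real^'d) set" where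
  "SP C S = {kappa. \<forall>x\<in>S. \<exists>lam\<in>Lambda C x. kappa x = (\<Sum>c\<in>C. lam c *\<^sub>R snd c)}"

end

theory Submission
  imports Defs
begin

text \<open>Every column (v, u) of the matrices X^j, U^j is a safe state-input pair: u is admissible
  and A v + B u + w lies in CS^j for every disturbance w. For the columns taken from O this is
  the robust invariance of O under K; for a column taken from a stored reachable set it is the
  feasibility of the stored N-step policy, since the successor lies in the next reachable set,
  which is part of CS^j. Safe pairs form a convex set, and a safe policy picks at x a convex
  combination of columns reproducing x, so (x, kappa x) is again a safe pair. That CS^j lies
  in X follows by induction over the iterations, since every point of a stored reachable set is
  a predicted state, which is in X before the horizon and in CS^(i-1) at the horizon.\<close>

definition safe_pairs :: "real^'n^'n \<Rightarrow> real^'d^'n \<Rightarrow> (real^'n) set \<Rightarrow> (real^'d) set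
    \<Rightarrow> (real^'n) set \<Rightarrow> ((real^'n) \<times> (real^'d)) set" where
  "safe_pairs A B W U S = {(v, u). u \<in> U \<and> (\<forall>w\<in>W. A *v v + B *v u + w \<in> S)}"

lemma safe_pairs_mono: "S \<subseteq> S' \<Longrightarrow> safe_pairs A B W U S \<subseteq> safe_pairs A B W U S'"
  unfolding safe_pairs_def by blast

lemma convex_safe_pairs:
  fixes A :: "real^'n^'n" and B :: "real^'d^'n"
  assumes "convex U" "convex S"
  shows "convex (safe_pairs A B W U S)"
proof -
  have "convex {p :: (real^'n) \<times> (real^'d). A *v fst p + B *v snd p + w \<in> S}" for w
  proof -
    have "linear (\<lambda>p :: (real^'n) \<times> (real^'d). A *v fst p + B *v snd p)"
      using linear_compose_add[OF linear_compose[OF linear_fst matrix_vector_mul_linear[of A]]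
          linear_compose[OF linear_snd matrix_vector_mul_linear[of B]]]
      by (simp add: o_def)
    from convex_linear_vimage[OF this convex_translation[OF \<open>convex S\<close>, of "- w"]]
    show ?thesis
      by (rule back_subst) (force simp: algebra_simps)
  qed
  moreover have "convex (snd -` U :: ((real^'n) \<times> (real^'d)) set)"
    using convex_linear_vimage[OF linear_snd \<open>convex U\<close>] .
  ultimately have "convex (snd -` U \<inter> (\<Inter>w\<in>W. {p. A *v fst p + B *v snd p + w \<in> S}))"
    by (intro convex_Int convex_INT) auto
  also have "snd -` U \<inter> (\<Inter>w\<in>W. {p. A *v fst p + B *v snd p + w \<in> S}) = safe_pairs A B W U S"
    unfolding safe_pairs_def by auto
  finally show ?thesis .
qed

lemma SP_in_convex_hull:
  assumes "kappa \<in> SP C S" "x \<in> S"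
  shows "(x, kappa x) \<in> convex hull C"
proof -
  obtain lam where lam: "\<forall>c\<in>C. lam c \<ge> 0" "(\<Sum>c\<in>C. lam c) = 1"
    "(\<Sum>c\<in>C. lam c *\<^sub>R fst c) = x" "kappa x = (\<Sum>c\<in>C. lam c *\<^sub>R snd c)"
    using assms unfolding SP_def Lambda_def by blast
  have "finite C"
    using lam(2) sum.infinite by fastforce
  have "(x, kappa x) = (\<Sum>c\<in>C. lam c *\<^sub>R c)"
    by (simp add: lam(3,4) prod_eq_iff fst_sum snd_sum)
  also have "\<dots> \<in> convex hull C"
    using lam(1,2) by (intro convex_sum[OF \<open>finite C\<close> convex_convex_hull]) (auto intro: hull_inc)
  finally show ?thesis .
qed

lemma pred_state_cong:
  "(\<forall>m<k. ws m = ws' m) \<Longrightarrow> pred_state A B p x0 t ws k = pred_state A B p x0 t ws' k"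
  by (induction k) auto

lemma propset_mono: "D \<subseteq> D' \<Longrightarrow> propset A B p D x0 t k \<subseteq> propset A B p D' x0 t k"
  by (induction k) fastforce+

lemma propset_subset_pred_states:
  assumes "D \<noteq> {}"
  shows "propset A B p D x0 t k \<subseteq> {pred_state A B p x0 t ws k | ws. \<forall>m. ws m \<in> D}"
proof (induction k)
  case 0
  then show ?case
    using assms by auto
next
  case (Suc k)
  show ?case
  proof
    fix y assume "y \<in> propset A B p D x0 t (Suc k)"
    then obtain x w ws where y: "y = A *v x + B *v p (t + k) x + w" and "w \<in> D"
      and ws: "\<forall>m. ws m \<in> D" "x = pred_state A B p x0 t ws k"
      using Suc.IH by auto
    have "x = pred_state A B p x0 t (ws(k := w)) k"
      using ws(2) pred_state_cong[of k ws "ws(k := w)"] by simp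
    then have "y = pred_state A B p x0 t (ws(k := w)) (Suc k)"
      by (simp add: y)
    moreover have "\<forall>m. (ws(k := w)) m \<in> D"
      using ws(1) \<open>w \<in> D\<close> by simp
    ultimately show "y \<in> {pred_state A B p x0 t ws (Suc k) | ws. \<forall>m. ws m \<in> D}"
      by blast
  qed
qed

lemma convex_CS: "convex Oset \<Longrightarrow> convex (CS A B W N T xtraj pol Oset i)"
  by (cases i) (simp_all add: convex_convex_hull)

lemma CS_subset_CS_Suc: "CS A B W N T xtraj pol Oset i \<subseteq> CS A B W N T xtraj pol Oset (Suc i)"
  by (simp add: subset_trans[OF Un_upper2 hull_subset])

lemma propset_subset_CS:
  "t \<le> T (Suc i) \<Longrightarrow> k \<le> N \<Longrightarrow>
   propset A B (pol (Suc i) t) W (xtraj (Suc i) t) t k \<subseteq> CS A B W N T xtraj pol Oset (Suc i)"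
  by (auto intro!: hull_subset[THEN subsetD]) (meson atLeastAtMost_iff le0)

locale robust_lmpc =
  fixes A :: "real^'n^'n" and B :: "real^'d^'n" and K :: "real^'n^'d"
    and W X Oset :: "(real^'n) set" and U :: "(real^'d) set"
    and VW VO :: "(real^'n) set" and N j :: nat and T :: "nat \<Rightarrow> nat"
    and xtraj :: "nat \<Rightarrow> nat \<Rightarrow> real^'n"
    and pol :: "nat \<Rightarrow> nat \<Rightarrow> nat \<Rightarrow> real^'n \<Rightarrow> real^'d"
  assumes VW_subset: "VW \<subseteq> W" and W_nonempty: "W \<noteq> {}"
    and convex_X: "convex X" and convex_U: "convex U"
    and VO_subset: "VO \<subseteq> Oset" and convex_Oset: "convex Oset" and Oset_subset: "Oset \<subseteq> X"
    and Oset_invariant: "\<forall>x\<in>Oset. \<forall>w\<in>W. (A + B ** K) *v x + w \<in> Oset"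
    and K_admissible: "\<forall>x\<in>Oset. K *v x \<in> U"
    and feasible: "\<forall>i\<in>{1..j}. \<forall>t\<le>T i. \<forall>ws. (\<forall>k. ws k \<in> W) \<longrightarrow>
                 (\<forall>k<N. pred_state A B (pol i t) (xtraj i t) t ws k \<in> X
                        \<and> pol i t (t + k) (pred_state A B (pol i t) (xtraj i t) t ws k) \<in> U)
                 \<and> pred_state A B (pol i t) (xtraj i t) t ws N \<in> CS A B W N T xtraj pol Oset (i - 1)"
begin

abbreviation safe_set :: "nat \<Rightarrow> (real^'n) set" where
  "safe_set i \<equiv> CS A B W N T xtraj pol Oset i"

abbreviation reachable :: "nat \<Rightarrow> nat \<Rightarrow> (real^'n) set \<Rightarrow> nat \<Rightarrow> (real^'n) set" where
  "reachable i t D k \<equiv> propset A B (pol i t) D (xtraj i t) t k"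

lemma reachable_feasible:
  assumes "Suc i \<le> j" "t \<le> T (Suc i)" "y \<in> reachable (Suc i) t W k"
  shows "k < N \<Longrightarrow> y \<in> X \<and> pol (Suc i) t (t + k) y \<in> U"
    and "k = N \<Longrightarrow> y \<in> safe_set i"
proof -
  obtain ws where "\<forall>m. ws m \<in> W" "y = pred_state A B (pol (Suc i) t) (xtraj (Suc i) t) t ws k"
    using propset_subset_pred_states[OF W_nonempty] assms(3) by blast
  with feasible assms(1,2) show "k < N \<Longrightarrow> y \<in> X \<and> pol (Suc i) t (t + k) y \<in> U"
    and "k = N \<Longrightarrow> y \<in> safe_set i"
    by fastforce+
qed

lemma CS_subset_X: "i \<le> j \<Longrightarrow> safe_set i \<subseteq> X"
proof (induction i)
  case 0
  then show ?case
    using Oset_subset by simp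
next
  case (Suc i)
  have "reachable (Suc i) t W k \<subseteq> X" if "t \<le> T (Suc i)" "k \<le> N" for t k
    using reachable_feasible[OF Suc.prems that(1)] Suc that(2) by (cases "k < N") auto
  with Suc show ?case
    unfolding CS.simps by (intro hull_minimal[where S=convex] Un_least UN_least convex_X) auto
qed

lemma columns_subset_safe_pairs:
  "i \<le> j \<Longrightarrow> cols A B K VW N T xtraj pol VO i \<subseteq> safe_pairs A B W U (safe_set i)"
proof (induction i)
  case 0
  have "A *v v + B *v (K *v v) + w = (A + B ** K) *v v + w" for v w
    by (simp add: matrix_vector_mul_assoc matrix_vector_mult_add_rdistrib)
  then show ?case
    using VO_subset Oset_invariant K_admissible by (auto simp: safe_pairs_def)
next
  case (Suc i)
  have "(v, pol (Suc i) t (t + k) v) \<in> safe_pairs A B W U (safe_set (Suc i))"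
    if "t \<le> T (Suc i)" "k < N" "v \<in> reachable (Suc i) t VW k" for t k v
  proof -
    have v: "v \<in> reachable (Suc i) t W k"
      using propset_mono[OF VW_subset] that(3) by blast
    have "A *v v + B *v pol (Suc i) t (t + k) v + w \<in> safe_set (Suc i)" if "w \<in> W" for w
    proof -
      have "A *v v + B *v pol (Suc i) t (t + k) v + w \<in> reachable (Suc i) t W (Suc k)"
        using v that by auto
      with propset_subset_CS \<open>t \<le> T (Suc i)\<close> Suc_leI[OF \<open>k < N\<close>] show ?thesis
        by blast
    qed
    then show ?thesis
      using reachable_feasible(1)[OF Suc.prems that(1) v \<open>k < N\<close>] by (simp add: safe_pairs_def)
  qed
  moreover have "safe_pairs A B W U (safe_set i) \<subseteq> safe_pairs A B W U (safe_set (Suc i))"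
    by (rule safe_pairs_mono[OF CS_subset_CS_Suc])
  ultimately show ?case
    using Suc by auto
qed

end

theorem proposition1:
  fixes A :: "real^'n^'n" and B :: "real^'d^'n" and K :: "real^'n^'d"
    and W X Oset :: "(real^'n) set" and U :: "(real^'d) set"
    and VW VO :: "(real^'n) set" and N j :: nat and T :: "nat \<Rightarrow> nat"
    and xtraj wtraj :: "nat \<Rightarrow> nat \<Rightarrow> real^'n"
    and pol :: "nat \<Rightarrow> nat \<Rightarrow> nat \<Rightarrow> real^'n \<Rightarrow> real^'d"
  assumes W_poly: "finite VW" "W = convex hull VW" "VW = {v. v extreme_point_of W}" "0 \<in> W"
    and X_ok: "convex X" "compact X" "0 \<in> X"
    and U_ok: "convex U" "compact U" "0 \<in> U"
    and O_poly: "finite VO" "Oset = convex hull VO" "VO = {v. v extreme_point_of Oset}" "Oset \<subseteq> X"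
    and O_inv: "\<forall>x\<in>Oset. \<forall>w\<in>W. (A + B ** K) *v x + w \<in> Oset"
    and O_input: "\<forall>x\<in>Oset. K *v x \<in> U"
    and N_pos: "N \<ge> 1"
    and traj: "\<forall>i\<in>{1..j}. \<forall>t<T i.
                 xtraj i (t + 1) = A *v xtraj i t + B *v pol i t t (xtraj i t) + wtraj i t
                 \<and> wtraj i t \<in> W"
    and feas: "\<forall>i\<in>{1..j}. \<forall>t\<le>T i. \<forall>ws. (\<forall>k. ws k \<in> W) \<longrightarrow>
                 (\<forall>k<N. pred_state A B (pol i t) (xtraj i t) t ws k \<in> X
                        \<and> pol i t (t + k) (pred_state A B (pol i t) (xtraj i t) t ws k) \<in> U)
                 \<and> pred_state A B (pol i t) (xtraj i t) t ws N \<in> CS A B W N T xtraj pol Oset (i - 1)"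
  shows "\<forall>kappa\<in>SP (cols A B K VW N T xtraj pol VO j) (CS A B W N T xtraj pol Oset j).
           \<forall>x\<in>CS A B W N T xtraj pol Oset j.
             (\<forall>w\<in>W. A *v x + B *v kappa x + w \<in> CS A B W N T xtraj pol Oset j)
             \<and> CS A B W N T xtraj pol Oset j \<subseteq> X
             \<and> kappa x \<in> U"
proof (intro ballI)
  interpret robust_lmpc A B K W X Oset U VW VO N j T xtraj pol
    using W_poly(2,4) X_ok(1) U_ok(1) O_poly(2,4) O_inv O_input feas
    by unfold_locales (auto simp: hull_subset convex_convex_hull)
  fix kappa x
  assume "kappa \<in> SP (cols A B K VW N T xtraj pol VO j) (safe_set j)" "x \<in> safe_set j"
  then have "(x, kappa x) \<in> convex hull cols A B K VW N T xtraj pol VO j"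
    by (rule SP_in_convex_hull)
  also have "\<dots> \<subseteq> safe_pairs A B W U (safe_set j)"
    by (intro hull_minimal columns_subset_safe_pairs convex_safe_pairs convex_U convex_CS
        convex_Oset order_refl)
  finally show "(\<forall>w\<in>W. A *v x + B *v kappa x + w \<in> safe_set j) \<and> safe_set j \<subseteq> X \<and> kappa x \<in> U"
    using CS_subset_X by (simp add: safe_pairs_def)
qed

end
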